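(* Let $(\mathfrak g,J)$ be a real Lie algebra with integrable complex structure and let $\rho:\mathfrak g\to\operatorname{End}E$ be an integrable representation on a real vector space $E$ with complex structure $I$. Then the bilinear map \[\delta:\mathfrak g^{0,1}\times E^{1,0}\to E^{1,0},\qquad(\bar X,V)\mapsto(\rho(\bar X)V)^{1,0},\] where $(\cdot)^{1,0}$ denotes the projection $E_{\mathbb C}\to E^{1,0}$ along $E^{0,1}$, is a $\mathbb C$-linear representation of the complex Lie algebra $\mathfrak g^{0,1}$ on $E^{1,0}$.
   Context: A complex structure on a real Lie algebra $\mathfrak g$ is $J$ with $J^2=-\mathrm{id}$ satisfying $[x,y]-[Jx,Jy]+J[Jx,y]+J[x,Jy]=0$. $\mathfrak g_{\mathbb C}=\mathfrak g^{1,0}\oplus\mathfrak g^{0,1}$ and $E_{\mathbb C}=E^{1,0}\oplus E^{0,1}$ are the $\pm i$-eigenspace decompositions of $J$ and $I$; $\rho$ is extended $\mathbb C$-linearly. The representation $\rho$ is called integrable if $[I,\rho(Jx)]+I[\rho(x),I]=0$ for all $x\in\mathfrak g$. *)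

theory Defs
  imports Complex_Main
begin

definition rlin :: "('a::real_vector \<Rightarrow> 'b::real_vector) \<Rightarrow> bool" where
  "rlin f \<longleftrightarrow> (\<forall>x y. f (x + y) = f x + f y) \<and> (\<forall>c x. f (c *\<^sub>R x) = c *\<^sub>R f x)"

definition lie_algebra :: "('g::real_vector \<Rightarrow> 'g \<Rightarrow> 'g) \<Rightarrow> bool" where
  "lie_algebra br \<longleftrightarrow> (\<forall>x. rlin (br x)) \<and> (\<forall>y. rlin (\<lambda>x. br x y)) \<and> (\<forall>x. br x x = 0)
     \<and> (\<forall>x y z. br x (br y z) + br y (br z x) + br z (br x y) = 0)"

(* Complex structure on the Lie algebra (integrable: vanishing Nijenhuis tensor). *)
definition lie_complex_structure :: "('g::real_vector \<Rightarrow> 'g \<Rightarrow> 'g) \<Rightarrow> ('g \<Rightarrow> 'g) \<Rightarrow> bool" where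
  "lie_complex_structure br J \<longleftrightarrow> rlin J \<and> (\<forall>x. J (J x) = - x)
     \<and> (\<forall>x y. br x y - br (J x) (J y) + J (br (J x) y) + J (br x (J y)) = 0)"

definition vs_complex_structure :: "('e::real_vector \<Rightarrow> 'e) \<Rightarrow> bool" where
  "vs_complex_structure I \<longleftrightarrow> rlin I \<and> (\<forall>v. I (I v) = - v)"

definition comm :: "('e \<Rightarrow> 'e::ab_group_add) \<Rightarrow> ('e \<Rightarrow> 'e) \<Rightarrow> 'e \<Rightarrow> 'e" where
  "comm A B = (\<lambda>v. A (B v) - B (A v))"

definition representation ::
  "('g::real_vector \<Rightarrow> 'g \<Rightarrow> 'g) \<Rightarrow> ('g \<Rightarrow> 'e::real_vector \<Rightarrow> 'e) \<Rightarrow> bool" where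
  "representation br \<rho> \<longleftrightarrow> (\<forall>v. rlin (\<lambda>x. \<rho> x v)) \<and> (\<forall>x. rlin (\<rho> x))
     \<and> (\<forall>x y. \<rho> (br x y) = comm (\<rho> x) (\<rho> y))"

definition integrable_rep :: "('g \<Rightarrow> 'g) \<Rightarrow> ('g \<Rightarrow> 'e::real_vector \<Rightarrow> 'e) \<Rightarrow> ('e \<Rightarrow> 'e) \<Rightarrow> bool" where
  "integrable_rep J \<rho> I \<longleftrightarrow> (\<forall>x v. comm I (\<rho> (J x)) v + I (comm (\<rho> x) I v) = 0)"

(* Complexification V_C = V + iV, an element (a,b) standing for a + i b. *)
type_synonym 'a cpx = "'a \<times> 'a"

definition cadd :: "'a::real_vector cpx \<Rightarrow> 'a cpx \<Rightarrow> 'a cpx" where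
  "cadd X Y = (fst X + fst Y, snd X + snd Y)"

definition csub :: "'a::real_vector cpx \<Rightarrow> 'a cpx \<Rightarrow> 'a cpx" where
  "csub X Y = (fst X - fst Y, snd X - snd Y)"

(* complex scalar multiplication: (x + i y)(a + i b) = (x a - y b) + i (x b + y a) *)
definition cscale :: "complex \<Rightarrow> 'a::real_vector cpx \<Rightarrow> 'a cpx" where
  "cscale c X = (Re c *\<^sub>R fst X - Im c *\<^sub>R snd X, Re c *\<^sub>R snd X + Im c *\<^sub>R fst X)"

definition cext :: "('a \<Rightarrow> 'b) \<Rightarrow> 'a cpx \<Rightarrow> 'b cpx" where
  "cext f X = (f (fst X), f (snd X))"

definition cbr :: "('g::real_vector \<Rightarrow> 'g \<Rightarrow> 'g) \<Rightarrow> 'g cpx \<Rightarrow> 'g cpx \<Rightarrow> 'g cpx" where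
  "cbr br X Y = (br (fst X) (fst Y) - br (snd X) (snd Y), br (fst X) (snd Y) + br (snd X) (fst Y))"

definition crho :: "('g \<Rightarrow> 'e::real_vector \<Rightarrow> 'e) \<Rightarrow> 'g cpx \<Rightarrow> 'e cpx \<Rightarrow> 'e cpx" where
  "crho \<rho> X W = (\<rho> (fst X) (fst W) - \<rho> (snd X) (snd W), \<rho> (fst X) (snd W) + \<rho> (snd X) (fst W))"

definition hol :: "('a::real_vector \<Rightarrow> 'a) \<Rightarrow> 'a cpx set" where
  "hol J = {X. cext J X = cscale \<i> X}"

definition antihol :: "('a::real_vector \<Rightarrow> 'a) \<Rightarrow> 'a cpx set" where
  "antihol J = {X. cext J X = cscale (- \<i>) X}"

definition proj10 :: "('a::real_vector \<Rightarrow> 'a) \<Rightarrow> 'a cpx \<Rightarrow> 'a cpx" where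
  "proj10 I W = (THE P. P \<in> hol I \<and> csub W P \<in> antihol I)"

end

theory Submission
  imports Defs
begin

text \<open>The antiholomorphic part \<open>\<gg>\<^sup>0\<^sup>,\<^sup>1\<close> is closed under the bracket because the Nijenhuis
  tensor of \<open>J\<close> vanishes, and integrability of \<open>\<rho>\<close> says precisely that \<open>\<rho>(X)\<close> maps
  \<open>E\<^sup>0\<^sup>,\<^sup>1\<close> into itself for \<open>X \<in> \<gg>\<^sup>0\<^sup>,\<^sup>1\<close>. Consequently the projection to \<open>E\<^sup>1\<^sup>,\<^sup>0\<close> may be
  dropped inside \<open>\<rho>(X)\<close>: \<open>(\<rho>(X) (W\<^sup>1\<^sup>,\<^sup>0))\<^sup>1\<^sup>,\<^sup>0 = (\<rho>(X) W)\<^sup>1\<^sup>,\<^sup>0\<close>. Hence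
  \<open>\<delta>(X) \<delta>(Y) V = (\<rho>(X) \<rho>(Y) V)\<^sup>1\<^sup>,\<^sup>0\<close>, and the bracket relation for \<open>\<delta>\<close> follows from that
  of the complexified representation, the projection being \<open>\<complex>\<close>-linear.\<close>

lemma rlin_simps:
  assumes "rlin f"
  shows "f (x + y) = f x + f y" and "f (c *\<^sub>R x) = c *\<^sub>R f x" and "f 0 = 0"
    and "f (- x) = - f x" and "f (x - y) = f x - f y"
proof -
  have add: "\<And>x y. f (x + y) = f x + f y" and scale: "\<And>c x. f (c *\<^sub>R x) = c *\<^sub>R f x"
    using assms unfolding rlin_def by blast+
  show "f (x + y) = f x + f y" by (rule add)
  show "f (c *\<^sub>R x) = c *\<^sub>R f x" by (rule scale)
  show "f 0 = 0" using scale[of 0 0] by simp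
  show "f (- x) = - f x" using scale[of "-1" x] by simp
  show "f (x - y) = f x - f y" using add[of x "- y"] scale[of "-1" y] by simp
qed

lemma scaleR_half_add_half [simp]:
  "(1/2) *\<^sub>R x + (1/2) *\<^sub>R x = (x::'a::real_vector)"
  "(1/2) *\<^sub>R x + ((1/2) *\<^sub>R x + y) = x + (y::'a::real_vector)"
  by (simp_all add: scaleR_left_distrib[symmetric] add.assoc[symmetric])

lemma mem_hol_iff: "X \<in> hol J \<longleftrightarrow> J (fst X) = - snd X \<and> J (snd X) = fst X"
  by (auto simp: hol_def cext_def cscale_def prod_eq_iff)

lemma mem_antihol_iff: "X \<in> antihol J \<longleftrightarrow> J (fst X) = snd X \<and> J (snd X) = - fst X"
  by (auto simp: antihol_def cext_def cscale_def prod_eq_iff)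

lemma lie_complex_structure_imp_vs_complex_structure:
  "lie_complex_structure br J \<Longrightarrow> vs_complex_structure J"
  by (simp add: lie_complex_structure_def vs_complex_structure_def)

context
  fixes I :: "'e::real_vector \<Rightarrow> 'e"
  assumes I: "vs_complex_structure I"
begin

lemma complex_structure_rlin: "rlin I"
  using I by (simp add: vs_complex_structure_def)

lemma complex_structure_square [simp]: "I (I v) = - v"
  using I by (simp add: vs_complex_structure_def)

lemmas complex_structure_simps [simp] = rlin_simps[OF complex_structure_rlin]

lemma mem_antihol_if_fst: "I p = q \<Longrightarrow> (p, q) \<in> antihol I"
  using complex_structure_square[of p] by (simp add: mem_antihol_iff)

lemma mem_antihol_if_snd: "I q = - p \<Longrightarrow> (p, q) \<in> antihol I"
  by (metis complex_structure_simps(4) complex_structure_square fst_conv mem_antihol_iff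
      minus_minus snd_conv)

lemma proj10_eq:
  "proj10 I W = ((1/2) *\<^sub>R (fst W + I (snd W)), (1/2) *\<^sub>R (snd W - I (fst W)))"
  unfolding proj10_def
proof (rule the_equality)
  show "((1/2) *\<^sub>R (fst W + I (snd W)), (1/2) *\<^sub>R (snd W - I (fst W))) \<in> hol I \<and>
    csub W ((1/2) *\<^sub>R (fst W + I (snd W)), (1/2) *\<^sub>R (snd W - I (fst W))) \<in> antihol I"
    by (simp add: mem_hol_iff mem_antihol_iff csub_def algebra_simps
        scaleR_left_diff_distrib[symmetric])
next
  fix P assume P: "P \<in> hol I \<and> csub W P \<in> antihol I"
  obtain a b where ab: "P = (a, b)" by fastforce
  obtain u v where uv: "W = (u, v)" by fastforce
  have hol: "I a = - b" "I b = a" using P ab by (auto simp: mem_hol_iff)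
  have "I u - I a = v - b" using P ab uv by (auto simp: mem_antihol_iff csub_def)
  then have "v - I u = 2 *\<^sub>R b" using hol by (simp add: algebra_simps scaleR_2)
  then have b: "b = (1/2) *\<^sub>R (v - I u)" by simp
  have "a = (1/2) *\<^sub>R (u + I v)" using hol(2) b by (simp add: algebra_simps)
  with ab uv b show "P = ((1/2) *\<^sub>R (fst W + I (snd W)), (1/2) *\<^sub>R (snd W - I (fst W)))"
    by simp
qed

lemma proj10_mem_hol: "proj10 I W \<in> hol I"
  by (simp add: proj10_eq mem_hol_iff algebra_simps)

lemma csub_proj10_mem_antihol: "csub W (proj10 I W) \<in> antihol I"
  by (simp add: proj10_eq mem_antihol_iff csub_def algebra_simps
      scaleR_left_diff_distrib[symmetric])

lemma proj10_antihol: "Q \<in> antihol I \<Longrightarrow> proj10 I Q = (0, 0)"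
  by (simp add: proj10_eq mem_antihol_iff)

lemma proj10_cadd: "proj10 I (cadd A B) = cadd (proj10 I A) (proj10 I B)"
  by (simp add: proj10_eq cadd_def algebra_simps)

lemma proj10_csub: "proj10 I (csub A B) = csub (proj10 I A) (proj10 I B)"
  by (simp add: proj10_eq csub_def algebra_simps)

lemma proj10_cscale: "proj10 I (cscale c A) = cscale c (proj10 I A)"
  by (simp add: proj10_eq cscale_def algebra_simps)

end

lemma cbr_mem_antihol:
  assumes J: "lie_complex_structure br J" and "X \<in> antihol J" and "Y \<in> antihol J"
  shows "cbr br X Y \<in> antihol J"
proof -
  have J_rlin: "rlin J"
    and Nijenhuis: "br x y - br (J x) (J y) + J (br (J x) y) + J (br x (J y)) = 0" for x y
    using J by (auto simp: lie_complex_structure_def)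
  obtain x x' y y' where X: "X = (x, x')" and Y: "Y = (y, y')" by fastforce
  have "J x = x'" "J y = y'" using assms X Y by (auto simp: mem_antihol_iff)
  then have "J (br x y' + br x' y) = - (br x y - br x' y')"
    using Nijenhuis[of x y] rlin_simps(1)[OF J_rlin] by (simp add: algebra_simps)
  then show ?thesis
    using mem_antihol_if_snd[OF lie_complex_structure_imp_vs_complex_structure[OF J]] X Y
    by (simp add: cbr_def)
qed

context
  fixes br :: "'g::real_vector \<Rightarrow> 'g \<Rightarrow> 'g" and \<rho> :: "'g \<Rightarrow> 'e::real_vector \<Rightarrow> 'e"
  assumes \<rho>: "representation br \<rho>"
begin

lemma rep_rlin_left: "rlin (\<lambda>x. \<rho> x v)"
  using \<rho> by (simp add: representation_def)

lemma rep_rlin_right: "rlin (\<rho> x)"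
  using \<rho> by (simp add: representation_def)

lemmas rep_simps_left = rlin_simps[OF rep_rlin_left, simplified]
lemmas rep_simps_right = rlin_simps[OF rep_rlin_right]

lemma crho_cadd_left: "crho \<rho> (cadd X Y) V = cadd (crho \<rho> X V) (crho \<rho> Y V)"
  by (simp add: rep_simps_left crho_def cadd_def algebra_simps)

lemma crho_cscale_left: "crho \<rho> (cscale c X) V = cscale c (crho \<rho> X V)"
  by (simp add: rep_simps_left crho_def cscale_def algebra_simps)

lemma crho_cadd_right: "crho \<rho> X (cadd V W) = cadd (crho \<rho> X V) (crho \<rho> X W)"
  by (simp add: rep_simps_right crho_def cadd_def algebra_simps)

lemma crho_cscale_right: "crho \<rho> X (cscale c V) = cscale c (crho \<rho> X V)"
  by (simp add: rep_simps_right crho_def cscale_def algebra_simps)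

lemma crho_cbr: "crho \<rho> (cbr br X Y) V = csub (crho \<rho> X (crho \<rho> Y V)) (crho \<rho> Y (crho \<rho> X V))"
proof -
  have bracket: "\<rho> (br x y) w = \<rho> x (\<rho> y w) - \<rho> y (\<rho> x w)" for x y w
    using \<rho> by (simp add: representation_def comm_def)
  show ?thesis
    by (simp add: bracket rep_simps_left rep_simps_right crho_def cbr_def csub_def algebra_simps)
qed

lemma crho_mem_antihol:
  assumes I: "vs_complex_structure I" and integrable: "integrable_rep J \<rho> I"
    and "X \<in> antihol J" and "Q \<in> antihol I"
  shows "crho \<rho> X Q \<in> antihol I"
proof -
  obtain x x' w w' where X: "X = (x, x')" and Q: "Q = (w, w')" by fastforce
  have "J x = x'" "I w = w'" "I w' = - w"
    using assms X Q by (auto simp: mem_antihol_iff)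
  moreover have "comm I (\<rho> (J x)) w' + I (comm (\<rho> x) I w') = 0"
    using integrable by (simp add: integrable_rep_def)
  ultimately have "I (\<rho> x' w') + \<rho> x' w - I (\<rho> x w) + \<rho> x w' = 0"
    using I by (simp add: comm_def rep_simps_right algebra_simps)
  then have "I (\<rho> x w - \<rho> x' w') = \<rho> x w' + \<rho> x' w"
    using I by (simp add: algebra_simps eq_neg_iff_add_eq_0 diff_eq_eq)
  then show ?thesis
    using mem_antihol_if_fst[OF I, of "\<rho> x w - \<rho> x' w'"] X Q by (simp add: crho_def)
qed

lemma proj10_crho_proj10:
  assumes I: "vs_complex_structure I" and J: "lie_complex_structure br J"
    and integrable: "integrable_rep J \<rho> I" and X: "X \<in> antihol J"
  shows "proj10 I (crho \<rho> X (proj10 I W)) = proj10 I (crho \<rho> X W)"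
proof -
  have "W = cadd (proj10 I W) (csub W (proj10 I W))"
    by (simp add: cadd_def csub_def)
  then have "proj10 I (crho \<rho> X W) =
      cadd (proj10 I (crho \<rho> X (proj10 I W))) (proj10 I (crho \<rho> X (csub W (proj10 I W))))"
    by (metis crho_cadd_right proj10_cadd[OF I])
  also have "proj10 I (crho \<rho> X (csub W (proj10 I W))) = (0, 0)"
    using proj10_antihol[OF I] crho_mem_antihol[OF I integrable X csub_proj10_mem_antihol[OF I]]
    by blast
  finally show ?thesis by (simp add: cadd_def)
qed

end

theorem mainTheorem3:
  fixes br :: "'g::real_vector \<Rightarrow> 'g \<Rightarrow> 'g"
    and J :: "'g \<Rightarrow> 'g"
    and \<rho> :: "'g \<Rightarrow> 'e::real_vector \<Rightarrow> 'e"
    and I :: "'e \<Rightarrow> 'e"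
  assumes "lie_algebra br"
    and "lie_complex_structure br J"
    and "vs_complex_structure I"
    and "representation br \<rho>"
    and "integrable_rep J \<rho> I"
  defines "\<delta> \<equiv> (\<lambda>X V. proj10 I (crho \<rho> X V))"
  shows "(\<forall>X\<in>antihol J. \<forall>Y\<in>antihol J. cbr br X Y \<in> antihol J)
    \<and> (\<forall>X\<in>antihol J. \<forall>V\<in>hol I. \<delta> X V \<in> hol I)
    \<and> (\<forall>X\<in>antihol J. \<forall>Y\<in>antihol J. \<forall>V\<in>hol I. \<delta> (cadd X Y) V = cadd (\<delta> X V) (\<delta> Y V))
    \<and> (\<forall>X\<in>antihol J. \<forall>V\<in>hol I. \<forall>c. \<delta> (cscale c X) V = cscale c (\<delta> X V))
    \<and> (\<forall>X\<in>antihol J. \<forall>V\<in>hol I. \<forall>W\<in>hol I. \<delta> X (cadd V W) = cadd (\<delta> X V) (\<delta> X W))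
    \<and> (\<forall>X\<in>antihol J. \<forall>V\<in>hol I. \<forall>c. \<delta> X (cscale c V) = cscale c (\<delta> X V))
    \<and> (\<forall>X\<in>antihol J. \<forall>Y\<in>antihol J. \<forall>V\<in>hol I.
         \<delta> (cbr br X Y) V = csub (\<delta> X (\<delta> Y V)) (\<delta> Y (\<delta> X V)))"
proof -
  \<comment> \<open>The bracket enters only through \<open>cbr\<close>, computed componentwise.\<close>
  note J = assms(2) and I = assms(3) and \<rho> = assms(4) and integrable = assms(5)
  have bracket: "\<delta> (cbr br X Y) V = csub (\<delta> X (\<delta> Y V)) (\<delta> Y (\<delta> X V))"
    if "X \<in> antihol J" "Y \<in> antihol J" for X Y V
    using that proj10_crho_proj10[OF \<rho> I J integrable]
    by (simp add: \<delta>_def crho_cbr[OF \<rho>] proj10_csub[OF I])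
  show ?thesis
    using cbr_mem_antihol[OF J] bracket
    by (simp add: \<delta>_def proj10_mem_hol[OF I] proj10_cadd[OF I] proj10_cscale[OF I]
        crho_cadd_left[OF \<rho>] crho_cscale_left[OF \<rho>]
        crho_cadd_right[OF \<rho>] crho_cscale_right[OF \<rho>])
qed

end
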